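(* Let $(X,d,\theta)$ be a $\theta$-metric space with $\theta$ a $B$-action. Then for every $a\in X$ and every $k>0$ there exists $r>0$ such that for all $b\in X$ with $d(a,b)\ge k$ and all $c\in X$, one has $d(a,c)+d(c,b)\ge r$.
   Context: A $B$-action is a map $\theta:[0,\infty)\times[0,\infty)\to[0,\infty)$ that is continuous in each variable separately and satisfies: (i) $\theta(0,0)=0$ and $\theta(s,t)=\theta(t,s)$ for all $s,t\ge0$; (ii) $\theta(x,y)<\theta(s,t)$ whenever either $x\le s,\ y<t$ or $x<s,\ y\le t$; (iii) for each $m\in\mathrm{Im}(\theta)=\{\theta(s,t):s,t\ge0\}$ and each $t\in[0,m]$ there is $s\in[0,m]$ with $\theta(s,t)=m$; (iv) $\theta(s,0)\le s$ for all $s>0$. A $\theta$-metric on a non-empty set $X$ with respect to a $B$-action $\theta$ is a map $d:X\times X\to[0,\infty)$ such that for all $x,y,z\in X$: $d(x,y)=0$ iff $x=y$; $d(x,y)=d(y,x)$; $d(x,z)\le\theta(d(x,y),d(y,z))$. *)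

theory Defs
  imports "HOL-Analysis.Analysis"
begin

text \<open>A B-action: a map theta on [0,inf) x [0,inf) into [0,inf), represented as a
  real function whose values off the nonnegative quadrant are irrelevant.\<close>
definition B_action :: "(real \<Rightarrow> real \<Rightarrow> real) \<Rightarrow> bool" where
  "B_action \<theta> \<longleftrightarrow>
     (\<forall>s\<ge>0. \<forall>t\<ge>0. \<theta> s t \<ge> 0) \<and>
     (\<forall>t\<ge>0. continuous_on {0..} (\<lambda>s. \<theta> s t)) \<and>
     (\<forall>s\<ge>0. continuous_on {0..} (\<lambda>t. \<theta> s t)) \<and>
     \<theta> 0 0 = 0 \<and>
     (\<forall>s\<ge>0. \<forall>t\<ge>0. \<theta> s t = \<theta> t s) \<and>
     (\<forall>x y s t. 0 \<le> x \<and> 0 \<le> y \<and> 0 \<le> s \<and> 0 \<le> t \<and>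
        ((x \<le> s \<and> y < t) \<or> (x < s \<and> y \<le> t)) \<longrightarrow> \<theta> x y < \<theta> s t) \<and>
     (\<forall>m \<in> {\<theta> s t | s t. s \<ge> 0 \<and> t \<ge> 0}. \<forall>t\<in>{0..m}. \<exists>s\<in>{0..m}. \<theta> s t = m) \<and>
     (\<forall>s>0. \<theta> s 0 \<le> s)"

definition theta_metric :: "(real \<Rightarrow> real \<Rightarrow> real) \<Rightarrow> 'a set \<Rightarrow> ('a \<Rightarrow> 'a \<Rightarrow> real) \<Rightarrow> bool" where
  "theta_metric \<theta> X d \<longleftrightarrow> X \<noteq> {} \<and>
     (\<forall>x\<in>X. \<forall>y\<in>X. d x y \<ge> 0) \<and>
     (\<forall>x\<in>X. \<forall>y\<in>X. d x y = 0 \<longleftrightarrow> x = y) \<and>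
     (\<forall>x\<in>X. \<forall>y\<in>X. d x y = d y x) \<and>
     (\<forall>x\<in>X. \<forall>y\<in>X. \<forall>z\<in>X. d x z \<le> \<theta> (d x y) (d y z))"

end

theory Submission
  imports Defs
begin

text \<open>Since \<open>\<theta>(s,0) \<le> s\<close>, continuity of \<open>\<theta>(s,\<cdot>)\<close> at \<open>0\<close> and strict monotonicity make
  \<open>\<theta>\<close> small on a small square \<open>[0,r)\<^sup>2\<close>. If \<open>d(a,c) + d(c,b)\<close> were below \<open>r\<close>, both
  summands would lie in that square, so \<open>d(a,b) \<le> \<theta>(d(a,c), d(c,b))\<close> would be below \<open>k\<close>.\<close>

lemma B_action_strict_mono:
  assumes "B_action \<theta>" "0 \<le> x" "0 \<le> y" "x < s" "y < t"
  shows "\<theta> x y < \<theta> s t"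
  using assms unfolding B_action_def by (meson less_imp_le order_trans)

lemma B_action_small_near_zero:
  assumes \<theta>: "B_action \<theta>" and k: "k > 0"
  obtains r where "r > 0" "\<And>x y. 0 \<le> x \<Longrightarrow> x < r \<Longrightarrow> 0 \<le> y \<Longrightarrow> y < r \<Longrightarrow> \<theta> x y < k"
proof -
  define s where "s = k / 2"
  have s: "s > 0" "s < k" using k by (simp_all add: s_def)
  have "\<theta> s 0 \<le> s" using \<theta> s(1) unfolding B_action_def by blast
  with s(2) have "\<theta> s 0 < k" by linarith
  moreover have "continuous_on {0..} (\<theta> s)" using \<theta> s unfolding B_action_def by auto
  ultimately obtain \<delta> where \<delta>: "\<delta> > 0"
    "\<And>t. 0 \<le> t \<Longrightarrow> dist t 0 < \<delta> \<Longrightarrow> dist (\<theta> s t) (\<theta> s 0) < k - \<theta> s 0"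
    unfolding continuous_on_iff by (metis atLeast_iff diff_gt_0_iff_gt order_refl)
  then have \<delta>': "\<And>t. 0 \<le> t \<Longrightarrow> t < \<delta> \<Longrightarrow> \<theta> s t < k"
    by (simp add: dist_real_def abs_less_iff)
  define t where "t = \<delta> / 2"
  have t: "t > 0" "\<theta> s t < k" using \<delta>(1) \<delta>' by (simp_all add: t_def)
  show thesis
  proof (rule that[of "min s t"])
    show "min s t > 0" using s t by simp
    show "\<theta> x y < k" if "0 \<le> x" "x < min s t" "0 \<le> y" "y < min s t" for x y
      using B_action_strict_mono[OF \<theta>, of x y s t] that t by simp
  qed
qed

theorem mainTheorem9:
  fixes \<theta> :: "real \<Rightarrow> real \<Rightarrow> real" and X :: "'a set" and d :: "'a \<Rightarrow> 'a \<Rightarrow> real"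
  assumes "B_action \<theta>" and "theta_metric \<theta> X d"
  shows "\<forall>a\<in>X. \<forall>k>0. \<exists>r>0. \<forall>b\<in>X. d a b \<ge> k \<longrightarrow> (\<forall>c\<in>X. d a c + d c b \<ge> r)"
proof (intro ballI allI impI)
  fix a k assume a: "a \<in> X" and k: "(k::real) > 0"
  obtain r where r: "r > 0" "\<And>x y. 0 \<le> x \<Longrightarrow> x < r \<Longrightarrow> 0 \<le> y \<Longrightarrow> y < r \<Longrightarrow> \<theta> x y < k"
    using B_action_small_near_zero[OF assms(1) k] by blast
  show "\<exists>r>0. \<forall>b\<in>X. d a b \<ge> k \<longrightarrow> (\<forall>c\<in>X. d a c + d c b \<ge> r)"
  proof (intro exI[of _ r] conjI ballI impI r(1))
    fix b c assume b: "b \<in> X" and far: "k \<le> d a b" and c: "c \<in> X"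
    have nonneg: "0 \<le> d a c" "0 \<le> d c b"
      using assms(2) a b c unfolding theta_metric_def by auto
    have triangle: "d a b \<le> \<theta> (d a c) (d c b)"
      using assms(2) a b c unfolding theta_metric_def by blast
    show "r \<le> d a c + d c b"
    proof (rule ccontr)
      assume "\<not> r \<le> d a c + d c b"
      then have "\<theta> (d a c) (d c b) < k" using r(2) nonneg by simp
      with triangle far show False by linarith
    qed
  qed
qed

end
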